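(* Let $r$ be a positive integer, let $G$ be a finite simple graph, and let $S$ be an $r$-net of $G$. Let $H$ be the induced subgraph of $G$ obtained by deleting the vertices of $S$, and suppose $H$ has at least one vertex. Then $\lambda_1(H)^{2r} \le \lambda_1(G)^{2r} - 1$.
   Context: An $r$-net in a graph $G$ is a subset $S$ of the vertex set of $G$ such that every vertex of $G$ lies within (graph) distance at most $r$ of some vertex of $S$. For a graph $F$, $\lambda_1(F)$ denotes the largest eigenvalue of the adjacency matrix of $F$. *)

theory Defs
  imports Main "Jordan_Normal_Form.Char_Poly"
begin

definition simple_graph :: "'a set \<Rightarrow> ('a \<Rightarrow> 'a \<Rightarrow> bool) \<Rightarrow> bool" where
  "simple_graph V E \<longleftrightarrow> finite V \<and> (\<forall>u v. E u v \<longrightarrow> E v u) \<and> (\<forall>v. \<not> E v v)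
     \<and> (\<forall>u v. E u v \<longrightarrow> u \<in> V \<and> v \<in> V)"

definition dist_le :: "'a set \<Rightarrow> ('a \<Rightarrow> 'a \<Rightarrow> bool) \<Rightarrow> 'a \<Rightarrow> 'a \<Rightarrow> nat \<Rightarrow> bool" where
  "dist_le V E u v k \<longleftrightarrow> (\<exists>p. p \<noteq> [] \<and> hd p = u \<and> last p = v \<and> length p \<le> k + 1
      \<and> set p \<subseteq> V \<and> (\<forall>i. Suc i < length p \<longrightarrow> E (p ! i) (p ! Suc i)))"

definition r_net :: "'a set \<Rightarrow> ('a \<Rightarrow> 'a \<Rightarrow> bool) \<Rightarrow> nat \<Rightarrow> 'a set \<Rightarrow> bool" where
  "r_net V E r S \<longleftrightarrow> S \<subseteq> V \<and> (\<forall>v\<in>V. \<exists>s\<in>S. dist_le V E v s r)"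

definition adj_matrix :: "'a::linorder set \<Rightarrow> ('a \<Rightarrow> 'a \<Rightarrow> bool) \<Rightarrow> real mat" where
  "adj_matrix W E = (let vs = sorted_list_of_set W in
     mat (length vs) (length vs) (\<lambda>(i,j). if E (vs ! i) (vs ! j) then 1 else 0))"

text \<open>Largest eigenvalue of the adjacency matrix (real symmetric, so all
  eigenvalues are real).\<close>
definition lambda1 :: "'a::linorder set \<Rightarrow> ('a \<Rightarrow> 'a \<Rightarrow> bool) \<Rightarrow> real" where
  "lambda1 W E = Max {k. eigenvalue (adj_matrix W E) k}"

end

theory Submission
  imports Defs "HOL-Analysis.Function_Topology"
begin

text \<open>Let \<open>x \<ge> 0\<close> be a unit Perron eigenvector of \<open>H = G - S\<close> for \<open>\<mu> = \<lambda>\<^sub>1(H)\<close>, extended by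
  zero to all of \<open>V\<close>. Counting walks, \<open>(A\<^sub>G\<^bsup>2r\<^esup>)\<^sub>u\<^sub>v \<ge> (A\<^sub>H\<^bsup>2r\<^esup>)\<^sub>u\<^sub>v\<close> for \<open>u, v \<notin> S\<close>, and on the
  diagonal \<open>G\<close> has at least one extra closed walk: go from \<open>u\<close> to a net point \<open>s\<close> in
  \<open>d \<le> r\<close> steps, return, and bounce along an edge at \<open>u\<close> for the remaining \<open>2 (r - d)\<close>
  steps. Hence \<open>x\<^sup>T A\<^sub>G\<^bsup>2r\<^esup> x \<ge> x\<^sup>T A\<^sub>H\<^bsup>2r\<^esup> x + |x|\<^sup>2 = \<mu>\<^bsup>2r\<^esup> + 1\<close>. On the other hand
  \<open>x\<^sup>T A\<^sub>G\<^bsup>2r\<^esup> x = |A\<^sub>G\<^sup>r x|\<^sup>2 \<le> \<lambda>\<^sub>1(G)\<^bsup>2r\<^esup>\<close>, because for the nonnegative symmetric \<open>A\<^sub>G\<close>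
  the largest eigenvalue bounds \<open>|y\<^sup>T A\<^sub>G y| / |y|\<^sup>2\<close>. Eigenvalues are handled through the
  Rayleigh quotient, whose maximiser on the unit sphere exists by compactness.\<close>

section \<open>Quadratic forms of a real kernel\<close>

definition quad_form :: "('a \<Rightarrow> 'a \<Rightarrow> real) \<Rightarrow> 'a set \<Rightarrow> ('a \<Rightarrow> real) \<Rightarrow> real" where
  "quad_form K W f = (\<Sum>u\<in>W. \<Sum>v\<in>W. f u * K u v * f v)"

definition sqnorm :: "'a set \<Rightarrow> ('a \<Rightarrow> real) \<Rightarrow> real" where
  "sqnorm W f = (\<Sum>u\<in>W. (f u)\<^sup>2)"

definition kernel_apply :: "('a \<Rightarrow> 'a \<Rightarrow> real) \<Rightarrow> 'a set \<Rightarrow> ('a \<Rightarrow> real) \<Rightarrow> 'a \<Rightarrow> real" where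
  "kernel_apply K W f u = (\<Sum>v\<in>W. K u v * f v)"

lemma sqnorm_nonneg: "0 \<le> sqnorm W f"
  unfolding sqnorm_def by (simp add: sum_nonneg)

lemma sqnorm_eq_0_iff: "finite W \<Longrightarrow> sqnorm W f = 0 \<longleftrightarrow> (\<forall>u\<in>W. f u = 0)"
  unfolding sqnorm_def by (simp add: sum_nonneg_eq_0_iff)

lemma sqnorm_abs [simp]: "sqnorm W (\<lambda>v. \<bar>f v\<bar>) = sqnorm W f"
  unfolding sqnorm_def by simp

lemma quad_form_scale: "quad_form K W (\<lambda>u. a * f u) = a\<^sup>2 * quad_form K W f"
  unfolding quad_form_def by (simp add: sum_distrib_left power2_eq_square algebra_simps)

lemma sqnorm_scale: "sqnorm W (\<lambda>u. a * f u) = a\<^sup>2 * sqnorm W f"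
  unfolding sqnorm_def by (simp add: sum_distrib_left power2_eq_square algebra_simps)

lemma sqnorm_delta:
  assumes "finite W" "u \<in> W" shows "sqnorm W (\<lambda>v. if v = u then 1 else 0) = 1"
proof -
  have "sqnorm W (\<lambda>v. if v = u then 1 else 0) = (\<Sum>v\<in>W. if v = u then 1 else 0)"
    unfolding sqnorm_def by (rule sum.cong) auto
  then show ?thesis using assms by simp
qed

lemma quad_form_attains_max_on_sphere:
  assumes fin: "finite W" and ne: "W \<noteq> {}"
  shows "\<exists>f. sqnorm W f = 1 \<and> (\<forall>g. sqnorm W g = 1 \<longrightarrow> quad_form K W g \<le> quad_form K W f)"
proof -
  let ?X = "product_topology (\<lambda>_. euclideanreal) W"
  define C where "C = {f \<in> topspace ?X. sqnorm W f \<in> {1}} \<inter> PiE W (\<lambda>_. {-1..1})"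
  have "continuous_map ?X euclideanreal (sqnorm W)"
    unfolding sqnorm_def using fin by (intro continuous_intros) auto
  then have "closedin ?X {f \<in> topspace ?X. sqnorm W f \<in> {1}}"
    by (rule closedin_continuous_map_preimage) simp
  then have "compactin ?X C"
    unfolding C_def by (rule closed_Int_compactin) (simp add: compactin_PiE)
  moreover have "continuous_map ?X euclideanreal (quad_form K W)"
    unfolding quad_form_def using fin by (intro continuous_intros) auto
  ultimately have "compact (quad_form K W ` C)"
    using image_compactin by fastforce
  moreover obtain u where u: "u \<in> W" using ne by auto
  then have "restrict (\<lambda>v. if v = u then 1 else 0) W \<in> C"
    using sqnorm_delta[OF fin u] unfolding C_def sqnorm_def by auto
  ultimately obtain f where fC: "f \<in> C" and fmax: "\<forall>h\<in>C. quad_form K W h \<le> quad_form K W f"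
    using compact_attains_sup[of "quad_form K W ` C"] by blast
  have "quad_form K W g \<le> quad_form K W f" if g: "sqnorm W g = 1" for g
  proof -
    have "\<bar>g u\<bar> \<le> 1" if "u \<in> W" for u
    proof -
      have "(g u)\<^sup>2 \<le> 1"
        using g member_le_sum[OF that _ fin, of "\<lambda>u. (g u)\<^sup>2"] unfolding sqnorm_def by simp
      then show ?thesis by (simp add: abs_square_le_1)
    qed
    then have "restrict g W \<in> C"
      using g unfolding C_def sqnorm_def by (auto simp: abs_le_iff)
    then show ?thesis
      using fmax unfolding quad_form_def by fastforce
  qed
  moreover have "sqnorm W f = 1" using fC unfolding C_def by auto
  ultimately show ?thesis by blast
qed

lemma rayleigh_max_exists:
  assumes "finite W" and "W \<noteq> {}"
  shows "\<exists>f. sqnorm W f = 1 \<and> (\<forall>g. quad_form K W g \<le> quad_form K W f * sqnorm W g)"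
proof -
  obtain f where f1: "sqnorm W f = 1"
    and fmax: "\<And>g. sqnorm W g = 1 \<Longrightarrow> quad_form K W g \<le> quad_form K W f"
    using quad_form_attains_max_on_sphere[OF assms] by blast
  have "quad_form K W g \<le> quad_form K W f * sqnorm W g" for g
  proof (cases "sqnorm W g = 0")
    case True
    then have "\<forall>u\<in>W. g u = 0"
      using \<open>finite W\<close> sqnorm_eq_0_iff by blast
    with True show ?thesis
      by (simp add: quad_form_def)
  next
    case False
    then have pos: "0 < sqnorm W g"
      using sqnorm_nonneg[of W g] by linarith
    define c where "c = sqrt (sqnorm W g)"
    have c: "c > 0" "c\<^sup>2 = sqnorm W g"
      using pos unfolding c_def by auto
    have "quad_form K W (\<lambda>u. (1 / c) * g u) \<le> quad_form K W f"
      by (intro fmax, unfold sqnorm_scale) (use c pos in \<open>simp add: power_divide\<close>)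
    then show ?thesis
      unfolding quad_form_scale using c pos by (simp add: power_divide pos_divide_le_eq mult.commute)
  qed
  with f1 show ?thesis by blast
qed

lemma quad_form_eq_sum_kernel_apply:
  "quad_form K W f = (\<Sum>u\<in>W. f u * kernel_apply K W f u)"
  by (simp add: quad_form_def kernel_apply_def sum_distrib_left mult.assoc)

lemma quad_form_add_scaled:
  assumes sym: "\<And>u v. K u v = K v u"
  shows "quad_form K W (\<lambda>v. f v + t * g v) = quad_form K W f
    + 2 * t * (\<Sum>u\<in>W. g u * kernel_apply K W f u) + t\<^sup>2 * quad_form K W g"
proof -
  have "(f u + t * g u) * K u v * (f v + t * g v) = f u * K u v * f v
    + t * (g v * K v u * f u) + t * (g u * K u v * f v) + t\<^sup>2 * (g u * K u v * g v)" for u v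
    by (simp add: sym[of u v] power2_eq_square algebra_simps)
  then have "quad_form K W (\<lambda>v. f v + t * g v) = quad_form K W f
    + t * (\<Sum>u\<in>W. \<Sum>v\<in>W. g v * K v u * f u) + t * (\<Sum>u\<in>W. \<Sum>v\<in>W. g u * K u v * f v)
    + t\<^sup>2 * quad_form K W g"
    by (simp add: quad_form_def sum.distrib sum_distrib_left)
  also have "(\<Sum>u\<in>W. \<Sum>v\<in>W. g v * K v u * f u) = (\<Sum>u\<in>W. \<Sum>v\<in>W. g u * K u v * f v)"
    by (rule sum.swap)
  also have "(\<Sum>u\<in>W. \<Sum>v\<in>W. g u * K u v * f v) = (\<Sum>u\<in>W. g u * kernel_apply K W f u)"
    by (simp add: kernel_apply_def sum_distrib_left mult.assoc)
  finally show ?thesis by simp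
qed

lemma sqnorm_add_scaled:
  "sqnorm W (\<lambda>v. f v + t * g v) = sqnorm W f + 2 * t * (\<Sum>u\<in>W. f u * g u) + t\<^sup>2 * sqnorm W g"
proof -
  have "(f u + t * g u)\<^sup>2 = (f u)\<^sup>2 + 2 * t * (f u * g u) + t\<^sup>2 * (g u)\<^sup>2" for u
    by (simp add: power2_eq_square algebra_simps)
  then show ?thesis by (simp add: sqnorm_def sum.distrib sum_distrib_left)
qed

lemma linear_coeff_eq_0_if_quadratic_nonpos:
  fixes b c :: real
  assumes "\<And>t. 2 * t * b + t\<^sup>2 * c \<le> 0"
  shows "b = 0"
proof (rule ccontr)
  assume "b \<noteq> 0"
  define D where "D = \<bar>c\<bar> + 1"
  have "D > 0" "2 * D + c > 0"
    unfolding D_def by (cases "c \<ge> 0"; simp)+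
  have "D\<^sup>2 * (2 * (b / D) * b + (b / D)\<^sup>2 * c) = b\<^sup>2 * (2 * D + c)"
    using \<open>D > 0\<close> by (simp add: field_simps power2_eq_square)
  also have "b\<^sup>2 * (2 * D + c) > 0"
    using \<open>b \<noteq> 0\<close> \<open>2 * D + c > 0\<close> by simp
  finally show False
    using mult_nonneg_nonpos[OF zero_le_power2[of D] assms[of "b / D"]] by linarith
qed

text \<open>First variation: perturbing a maximiser of the Rayleigh quotient in the direction of a
  single point cannot increase the quotient, which forces the eigenvalue equation at that point.\<close>
lemma kernel_apply_eq_if_rayleigh_max:
  assumes fin: "finite W" and sym: "\<And>u v. K u v = K v u" and u: "u \<in> W"
    and eq: "quad_form K W f = \<mu> * sqnorm W f"
    and max: "\<And>g. quad_form K W g \<le> \<mu> * sqnorm W g"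
  shows "kernel_apply K W f u = \<mu> * f u"
proof (rule linear_coeff_eq_0_if_quadratic_nonpos[where c = "K u u - \<mu>", THEN eq_iff_diff_eq_0[THEN iffD2]])
  define e where "e v = (if v = u then 1 else 0 :: real)" for v
  have delta: "(\<Sum>w\<in>W. e w * h w) = h u" for h
    using fin u by (simp add: e_def if_distrib[of "\<lambda>a. a * _"] cong: if_cong)
  have "quad_form K W e = K u u"
    unfolding quad_form_eq_sum_kernel_apply delta
    using fin u by (simp add: kernel_apply_def e_def if_distrib[of "\<lambda>a. _ * a"] cong: if_cong)
  moreover have "(\<Sum>w\<in>W. f w * e w) = f u"
    using delta[of f] by (simp add: mult.commute)
  moreover have "sqnorm W e = 1"
    unfolding e_def by (rule sqnorm_delta[OF fin u])
  ultimately show "2 * t * (kernel_apply K W f u - \<mu> * f u) + t\<^sup>2 * (K u u - \<mu>) \<le> 0" for t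
    using max[of "\<lambda>v. f v + t * e v"]
    unfolding quad_form_add_scaled[OF sym] sqnorm_add_scaled eq delta by (simp add: algebra_simps)
qed

lemma abs_quad_form_le:
  assumes "\<And>u v. 0 \<le> K u v"
  shows "\<bar>quad_form K W f\<bar> \<le> quad_form K W (\<lambda>v. \<bar>f v\<bar>)"
  unfolding quad_form_def
  by (rule order_trans[OF sum_abs sum_mono], rule order_trans[OF sum_abs sum_mono])
     (simp add: abs_mult assms)

lemma abs_quad_form_le_of_upper_bound:
  assumes "\<And>u v. 0 \<le> K u v" and "\<And>g. quad_form K W g \<le> \<mu> * sqnorm W g"
  shows "\<bar>quad_form K W g\<bar> \<le> \<mu> * sqnorm W g"
proof -
  have "\<bar>quad_form K W g\<bar> \<le> quad_form K W (\<lambda>v. \<bar>g v\<bar>)"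
    by (rule abs_quad_form_le[OF assms(1)])
  also have "\<dots> \<le> \<mu> * sqnorm W g"
    using assms(2)[of "\<lambda>v. \<bar>g v\<bar>"] by simp
  finally show ?thesis .
qed

text \<open>Polarisation: \<open>4 t |Kx|\<^sup>2\<close> is the difference of the quadratic forms at \<open>x \<plusminus> t Kx\<close>.\<close>
lemma sqnorm_kernel_apply_le:
  assumes sym: "\<And>u v. K u v = K v u" and bound: "\<And>g. \<bar>quad_form K W g\<bar> \<le> \<mu> * sqnorm W g"
  shows "sqnorm W (kernel_apply K W x) \<le> \<mu>\<^sup>2 * sqnorm W x"
proof -
  define y where "y = kernel_apply K W x"
  have cross: "(\<Sum>u\<in>W. y u * kernel_apply K W x u) = sqnorm W y"
    by (simp add: y_def sqnorm_def power2_eq_square)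
  have key: "4 * t * sqnorm W y \<le> 2 * \<mu> * (sqnorm W x + t\<^sup>2 * sqnorm W y)" for t
  proof -
    have "quad_form K W (\<lambda>v. x v + t * y v) \<le> \<mu> * sqnorm W (\<lambda>v. x v + t * y v)"
      "- (\<mu> * sqnorm W (\<lambda>v. x v + (- t) * y v)) \<le> quad_form K W (\<lambda>v. x v + (- t) * y v)"
      using bound[of "\<lambda>v. x v + t * y v"] bound[of "\<lambda>v. x v + (- t) * y v"] by (simp_all add: abs_le_iff)
    then show ?thesis
      unfolding quad_form_add_scaled[OF sym] sqnorm_add_scaled cross
      by (simp add: algebra_simps)
  qed
  have nonneg: "0 \<le> sqnorm W x" "0 \<le> sqnorm W y"
    by (rule sqnorm_nonneg)+
  show ?thesis
  proof (cases "\<mu> > 0")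
    case True
    have "4 * (1 / \<mu>) * sqnorm W y \<le> 2 * \<mu> * (sqnorm W x + (1 / \<mu>)\<^sup>2 * sqnorm W y)"
      by (rule key)
    also have "\<dots> = 2 * \<mu> * sqnorm W x + 2 * (sqnorm W y / \<mu>)"
      using True by (simp add: field_simps power2_eq_square)
    finally have "sqnorm W y / \<mu> \<le> \<mu> * sqnorm W x"
      by simp
    with True show ?thesis
      unfolding y_def by (simp add: pos_divide_le_eq power2_eq_square mult.commute mult.left_commute)
  next
    case False
    have "4 * 1 * sqnorm W y \<le> 2 * \<mu> * (sqnorm W x + 1\<^sup>2 * sqnorm W y)"
      by (rule key)
    also have "\<dots> \<le> 0"
      by (rule mult_nonpos_nonneg) (use False nonneg in auto)
    finally have "sqnorm W y \<le> 0"
      by simp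
    moreover have "0 \<le> \<mu>\<^sup>2 * sqnorm W x"
      using nonneg by simp
    ultimately show ?thesis
      unfolding y_def by linarith
  qed
qed

lemma quad_form_mono_kernel:
  assumes "\<And>v. v \<in> W \<Longrightarrow> 0 \<le> x v" and "\<And>u v. u \<in> W \<Longrightarrow> v \<in> W \<Longrightarrow> K u v \<le> L u v"
  shows "quad_form K W x \<le> quad_form L W x"
  unfolding quad_form_def using assms
  by (intro sum_mono mult_right_mono mult_left_mono) auto

lemma quad_form_add_identity:
  assumes "finite W"
  shows "quad_form (\<lambda>u v. K u v + (if u = v then 1 else 0)) W x = quad_form K W x + sqnorm W x"
proof -
  have "x u * (K u v + (if u = v then 1 else 0)) * x v
      = x u * K u v * x v + (if v = u then (x u)\<^sup>2 else 0)" for u v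
    by (simp add: algebra_simps power2_eq_square)
  then show ?thesis
    using assms by (simp add: quad_form_def sqnorm_def sum.distrib)
qed

lemma quad_form_extend_zero:
  assumes "finite V" "W \<subseteq> V"
  shows "quad_form K V (\<lambda>v. if v \<in> W then x v else 0) = quad_form K W x"
  unfolding quad_form_def using assms
  by (auto intro!: sum.mono_neutral_cong_right)

lemma sqnorm_extend_zero:
  assumes "finite V" "W \<subseteq> V"
  shows "sqnorm V (\<lambda>v. if v \<in> W then x v else 0) = sqnorm W x"
  unfolding sqnorm_def using assms
  by (auto intro!: sum.mono_neutral_cong_right)

section \<open>Powers of a kernel\<close>

text \<open>The \<open>(u, v)\<close> entry of the \<open>k\<close>-th power of \<open>K\<close> restricted to \<open>W\<close>; for an adjacency kernel,
  the number of walks of length \<open>k\<close> from \<open>u\<close> to \<open>v\<close> inside \<open>W\<close>.\<close>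
fun kernel_pow :: "('a \<Rightarrow> 'a \<Rightarrow> real) \<Rightarrow> 'a set \<Rightarrow> nat \<Rightarrow> 'a \<Rightarrow> 'a \<Rightarrow> real" where
  "kernel_pow K W 0 u v = (if u = v then 1 else 0)"
| "kernel_pow K W (Suc k) u v = (\<Sum>w\<in>W. K u w * kernel_pow K W k w v)"

lemma kernel_pow_nonneg: "(\<And>u v. 0 \<le> K u v) \<Longrightarrow> 0 \<le> kernel_pow K W k u v"
  by (induction k arbitrary: u) (auto intro!: sum_nonneg)

lemma kernel_pow_add:
  assumes fin: "finite W" and "u \<in> W"
  shows "kernel_pow K W (a + b) u v = (\<Sum>w\<in>W. kernel_pow K W a u w * kernel_pow K W b w v)"
  using \<open>u \<in> W\<close>
proof (induction a arbitrary: u)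
  case 0
  then show ?case
    using fin by (simp add: if_distrib[of "\<lambda>a. a * _"] cong: if_cong)
next
  case (Suc a)
  have "kernel_pow K W (Suc a + b) u v = (\<Sum>x\<in>W. \<Sum>w\<in>W. K u x * kernel_pow K W a x w * kernel_pow K W b w v)"
    by (simp add: Suc.IH sum_distrib_left mult.assoc)
  also have "\<dots> = (\<Sum>w\<in>W. \<Sum>x\<in>W. K u x * kernel_pow K W a x w * kernel_pow K W b w v)"
    by (rule sum.swap)
  also have "\<dots> = (\<Sum>w\<in>W. kernel_pow K W (Suc a) u w * kernel_pow K W b w v)"
    by (simp add: sum_distrib_right)
  finally show ?case .
qed

lemma kernel_pow_Suc_right:
  assumes "finite W" "u \<in> W" "v \<in> W"
  shows "kernel_pow K W (Suc k) u v = (\<Sum>w\<in>W. kernel_pow K W k u w * K w v)"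
  using kernel_pow_add[OF assms(1,2), where a = k and b = 1] assms
  by (simp add: if_distrib[of "\<lambda>a. _ * a"] cong: if_cong)

lemma kernel_pow_sym:
  assumes fin: "finite W" and sym: "\<And>u v. K u v = K v u"
  shows "u \<in> W \<Longrightarrow> v \<in> W \<Longrightarrow> kernel_pow K W k u v = kernel_pow K W k v u"
proof (induction k arbitrary: u v)
  case (Suc k)
  have "kernel_pow K W (Suc k) u v = (\<Sum>w\<in>W. kernel_pow K W k v w * K w u)"
    using Suc by (auto simp: sym[of u] mult.commute intro!: sum.cong)
  also have "\<dots> = kernel_pow K W (Suc k) v u"
    using kernel_pow_Suc_right[OF fin Suc.prems(2,1)] by simp
  finally show ?case .
qed simp

lemma kernel_pow_mult_le:
  assumes "finite W" "u \<in> W" "w \<in> W" "\<And>u v. 0 \<le> K u v"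
  shows "kernel_pow K W a u w * kernel_pow K W b w v \<le> kernel_pow K W (a + b) u v"
  unfolding kernel_pow_add[OF assms(1,2)]
  by (rule member_le_sum[OF assms(3)]) (simp_all add: kernel_pow_nonneg assms)

lemma kernel_pow_mono_set:
  assumes fin: "finite V" and "W \<subseteq> V" and nonneg: "\<And>u v. 0 \<le> K u v"
  shows "kernel_pow K W k u v \<le> kernel_pow K V k u v"
proof (induction k arbitrary: u)
  case (Suc k)
  have "kernel_pow K W (Suc k) u v \<le> (\<Sum>w\<in>W. K u w * kernel_pow K V k w v)"
    by (auto intro!: sum_mono mult_left_mono Suc.IH nonneg)
  also have "\<dots> \<le> kernel_pow K V (Suc k) u v"
    by (auto intro!: sum_mono2 fin \<open>W \<subseteq> V\<close> mult_nonneg_nonneg kernel_pow_nonneg nonneg)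
  finally show ?case .
qed simp

text \<open>Walks in \<open>V\<close> that pass through \<open>s \<notin> W\<close> after \<open>a\<close> steps are not walks in \<open>W\<close>.\<close>
lemma kernel_pow_subset_add_le:
  assumes fin: "finite V" and WV: "W \<subseteq> V" and nonneg: "\<And>u v. 0 \<le> K u v"
    and u: "u \<in> W" and s: "s \<in> V - W"
  shows "kernel_pow K W (a + b) u v + kernel_pow K V a u s * kernel_pow K V b s v
    \<le> kernel_pow K V (a + b) u v"
proof -
  let ?t = "\<lambda>w. kernel_pow K V a u w * kernel_pow K V b w v"
  have finW: "finite W"
    using fin WV finite_subset by blast
  have "kernel_pow K W (a + b) u v = (\<Sum>w\<in>W. kernel_pow K W a u w * kernel_pow K W b w v)"
    by (rule kernel_pow_add[OF finW u])
  also have "\<dots> \<le> (\<Sum>w\<in>W. ?t w)"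
    by (intro sum_mono mult_mono kernel_pow_mono_set[OF fin WV nonneg] kernel_pow_nonneg nonneg)
  finally have "kernel_pow K W (a + b) u v \<le> (\<Sum>w\<in>W. ?t w)" .
  moreover have "?t s \<le> (\<Sum>w\<in>V - W. ?t w)"
    using fin s by (intro member_le_sum) (simp_all add: kernel_pow_nonneg nonneg)
  moreover have "kernel_pow K V (a + b) u v = (\<Sum>w\<in>V. ?t w)"
    using u WV by (intro kernel_pow_add[OF fin]) auto
  moreover have "(\<Sum>w\<in>V. ?t w) = (\<Sum>w\<in>V - W. ?t w) + (\<Sum>w\<in>W. ?t w)"
    by (rule sum.subset_diff[OF WV fin])
  ultimately show ?thesis
    by linarith
qed

lemma kernel_apply_funpow:
  assumes "finite W" "u \<in> W"
  shows "(kernel_apply K W ^^ k) x u = kernel_apply (kernel_pow K W k) W x u"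
  using assms(2)
proof (induction k arbitrary: u)
  case 0
  then show ?case
    using assms(1) by (simp add: kernel_apply_def if_distrib[of "\<lambda>a. a * _"] cong: if_cong)
next
  case (Suc k)
  have "(kernel_apply K W ^^ Suc k) x u = (\<Sum>w\<in>W. \<Sum>v\<in>W. K u w * kernel_pow K W k w v * x v)"
    by (simp add: kernel_apply_def Suc.IH sum_distrib_left mult.assoc cong: sum.cong)
  also have "\<dots> = kernel_apply (kernel_pow K W (Suc k)) W x u"
    by (subst sum.swap) (simp add: kernel_apply_def sum_distrib_right)
  finally show ?case .
qed

lemma quad_form_kernel_pow:
  "finite W \<Longrightarrow> quad_form (kernel_pow K W k) W x = (\<Sum>u\<in>W. x u * (kernel_apply K W ^^ k) x u)"
  by (simp add: quad_form_eq_sum_kernel_apply kernel_apply_funpow)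

lemma sum_mult_kernel_apply_sym:
  assumes sym: "\<And>u v. K u v = K v u"
  shows "(\<Sum>u\<in>W. f u * kernel_apply K W g u) = (\<Sum>u\<in>W. kernel_apply K W f u * g u)"
proof -
  have "(\<Sum>u\<in>W. f u * kernel_apply K W g u) = (\<Sum>u\<in>W. \<Sum>v\<in>W. f u * K v u * g v)"
    by (simp add: kernel_apply_def sum_distrib_left sym mult.assoc)
  also have "\<dots> = (\<Sum>u\<in>W. kernel_apply K W f u * g u)"
    by (subst sum.swap) (simp add: kernel_apply_def sum_distrib_left sum_distrib_right mult.commute mult.left_commute)
  finally show ?thesis .
qed

lemma sum_mult_funpow_kernel_apply_add:
  assumes "\<And>u v. K u v = K v u"
  shows "(\<Sum>u\<in>W. f u * (kernel_apply K W ^^ (a + b)) g u)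
    = (\<Sum>u\<in>W. (kernel_apply K W ^^ a) f u * (kernel_apply K W ^^ b) g u)"
proof (induction a arbitrary: f)
  case (Suc a)
  have "(\<Sum>u\<in>W. f u * (kernel_apply K W ^^ (Suc a + b)) g u)
      = (\<Sum>u\<in>W. kernel_apply K W f u * (kernel_apply K W ^^ (a + b)) g u)"
    using sum_mult_kernel_apply_sym[OF assms] by simp
  also have "\<dots> = (\<Sum>u\<in>W. (kernel_apply K W ^^ Suc a) f u * (kernel_apply K W ^^ b) g u)"
    by (simp add: Suc.IH funpow_swap1)
  finally show ?case .
qed simp

lemma quad_form_kernel_pow_double:
  assumes "finite W" and "\<And>u v. K u v = K v u"
  shows "quad_form (kernel_pow K W (2 * k)) W x = sqnorm W ((kernel_apply K W ^^ k) x)"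
  using sum_mult_funpow_kernel_apply_add[OF assms(2), where W = W and f = x and g = x and a = k and b = k]
  by (simp add: quad_form_kernel_pow[OF assms(1)] sqnorm_def mult_2 power2_eq_square)

lemma sqnorm_funpow_kernel_apply_le:
  assumes "\<And>u v. K u v = K v u" and "\<And>g. \<bar>quad_form K W g\<bar> \<le> \<mu> * sqnorm W g"
  shows "sqnorm W ((kernel_apply K W ^^ k) x) \<le> \<mu> ^ (2 * k) * sqnorm W x"
proof (induction k)
  case (Suc k)
  have "sqnorm W ((kernel_apply K W ^^ Suc k) x) \<le> \<mu>\<^sup>2 * sqnorm W ((kernel_apply K W ^^ k) x)"
    using sqnorm_kernel_apply_le[OF assms] by simp
  also have "\<dots> \<le> \<mu>\<^sup>2 * (\<mu> ^ (2 * k) * sqnorm W x)"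
    by (rule mult_left_mono[OF Suc.IH]) simp
  also have "\<dots> = \<mu> ^ (2 * Suc k) * sqnorm W x"
    by (simp add: power2_eq_square)
  finally show ?case .
qed simp

lemma funpow_kernel_apply_eigen:
  assumes "\<forall>u\<in>W. kernel_apply K W x u = \<mu> * x u" and "u \<in> W"
  shows "(kernel_apply K W ^^ k) x u = \<mu> ^ k * x u"
  using assms(2)
proof (induction k arbitrary: u)
  case (Suc k)
  have "(kernel_apply K W ^^ Suc k) x u = \<mu> ^ k * kernel_apply K W x u"
    by (simp add: kernel_apply_def Suc.IH sum_distrib_left mult.left_commute cong: sum.cong)
  then show ?case
    using assms(1) Suc.prems by simp
qed simp

lemma quad_form_kernel_pow_eigen:
  assumes "finite W" and "\<forall>u\<in>W. kernel_apply K W x u = \<mu> * x u"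
  shows "quad_form (kernel_pow K W k) W x = \<mu> ^ k * sqnorm W x"
  by (simp add: quad_form_kernel_pow[OF assms(1)] funpow_kernel_apply_eigen[OF assms(2)]
      sqnorm_def sum_distrib_left power2_eq_square mult.left_commute cong: sum.cong)

section \<open>The adjacency kernel and the largest eigenvalue\<close>

definition adj_kernel :: "('a \<Rightarrow> 'a \<Rightarrow> bool) \<Rightarrow> 'a \<Rightarrow> 'a \<Rightarrow> real" where
  "adj_kernel E u v = (if E u v then 1 else 0)"

lemma adj_kernel_nonneg: "0 \<le> adj_kernel E u v"
  by (simp add: adj_kernel_def)

lemma adj_kernel_sym: "simple_graph V E \<Longrightarrow> adj_kernel E u v = adj_kernel E v u"
  unfolding simple_graph_def adj_kernel_def by metis

lemma sum_sorted_list_of_set: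
  assumes "finite W"
  shows "(\<Sum>u\<in>W. h u) = (\<Sum>i<card W. h (sorted_list_of_set W ! i))"
proof -
  let ?vs = "sorted_list_of_set W"
  have "inj_on ((!) ?vs) {..<length ?vs}"
    by (simp add: inj_on_nth)
  moreover have "(!) ?vs ` {..<length ?vs} = W"
    using assms by (metis atLeast_upt list.set_map map_nth set_sorted_list_of_set)
  ultimately show ?thesis
    using sum.reindex[of "(!) ?vs" "{..<length ?vs}" h] by simp
qed

lemma adj_matrix_carrier: "adj_matrix W E \<in> carrier_mat (card W) (card W)"
  by (simp add: adj_matrix_def Let_def)

lemma adj_matrix_mult_vec:
  assumes "finite W"
  defines "vs \<equiv> sorted_list_of_set W"
  shows "adj_matrix W E *\<^sub>v vec (card W) (\<lambda>i. f (vs ! i))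
    = vec (card W) (\<lambda>i. kernel_apply (adj_kernel E) W f (vs ! i))"
  using assms
  by (auto simp: adj_matrix_def Let_def vs_def mult_mat_vec_def scalar_prod_def kernel_apply_def adj_kernel_def
      sum_sorted_list_of_set[of W] atLeast0LessThan intro!: sum.cong)

lemma eigenvalue_adj_matrix_iff:
  assumes fin: "finite W"
  shows "eigenvalue (adj_matrix W E) k \<longleftrightarrow>
    (\<exists>f. (\<exists>u\<in>W. f u \<noteq> 0) \<and> (\<forall>u\<in>W. kernel_apply (adj_kernel E) W f u = k * f u))"
    (is "_ \<longleftrightarrow> (\<exists>f. ?eigenfun f)")
proof -
  let ?vs = "sorted_list_of_set W" and ?n = "card W"
  let ?vec = "\<lambda>f. vec ?n (\<lambda>i. f (?vs ! i))"
  note carrier = adj_matrix_carrier[of W E]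
  have W: "W = {?vs ! i |i. i < ?n}"
    using fin by (metis length_sorted_list_of_set set_conv_nth set_sorted_list_of_set)
  have "eigenvalue (adj_matrix W E) k \<longleftrightarrow> (\<exists>f. ?vec f \<noteq> 0\<^sub>v ?n \<and> adj_matrix W E *\<^sub>v ?vec f = k \<cdot>\<^sub>v ?vec f)"
  proof
    assume "eigenvalue (adj_matrix W E) k"
    then obtain v where v: "v \<in> carrier_vec ?n" "v \<noteq> 0\<^sub>v ?n" "adj_matrix W E *\<^sub>v v = k \<cdot>\<^sub>v v"
      using carrier unfolding eigenvalue_def eigenvector_def by auto
    have "inj_on ((!) ?vs) {..<?n}"
      by (simp add: inj_on_nth)
    then have "v = ?vec (\<lambda>u. v $ inv_into {..<?n} ((!) ?vs) u)"
      using v(1) by (intro eq_vecI) auto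
    with v(2,3) show "\<exists>f. ?vec f \<noteq> 0\<^sub>v ?n \<and> adj_matrix W E *\<^sub>v ?vec f = k \<cdot>\<^sub>v ?vec f"
      by (intro exI[of _ "\<lambda>u. v $ inv_into {..<?n} ((!) ?vs) u"]) simp
  next
    assume "\<exists>f. ?vec f \<noteq> 0\<^sub>v ?n \<and> adj_matrix W E *\<^sub>v ?vec f = k \<cdot>\<^sub>v ?vec f"
    then obtain f where "?vec f \<noteq> 0\<^sub>v ?n" "adj_matrix W E *\<^sub>v ?vec f = k \<cdot>\<^sub>v ?vec f"
      by blast
    with carrier show "eigenvalue (adj_matrix W E) k"
      unfolding eigenvalue_def eigenvector_def by (intro exI[of _ "?vec f"]) simp
  qed
  also have "\<dots> \<longleftrightarrow> (\<exists>f. ?eigenfun f)"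
    unfolding adj_matrix_mult_vec[OF fin] by (subst W, subst W) (auto simp: vec_eq_iff)
  finally show ?thesis .
qed

lemma finite_eigenvalues:
  assumes "A \<in> carrier_mat n n"
  shows "finite {k :: 'a :: field. eigenvalue A k}"
proof -
  have "char_poly A \<noteq> 0"
    using degree_monic_char_poly[OF assms] by auto
  then have "finite {k. poly (char_poly A) k = 0}"
    by (rule poly_roots_finite)
  then show ?thesis
    using eigenvalue_root_char_poly[OF assms] by simp
qed

lemma lambda1_eq_rayleigh_max:
  assumes fin: "finite W" and f: "sqnorm W f = 1"
    and eigen: "\<forall>u\<in>W. kernel_apply (adj_kernel E) W f u = \<mu> * f u"
    and max: "\<And>g. quad_form (adj_kernel E) W g \<le> \<mu> * sqnorm W g"
  shows "lambda1 W E = \<mu>"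
  unfolding lambda1_def
proof (rule Max_eqI)
  show "finite {k. eigenvalue (adj_matrix W E) k}"
    by (rule finite_eigenvalues[OF adj_matrix_carrier])
  show "\<mu> \<in> {k. eigenvalue (adj_matrix W E) k}"
    using f eigen sqnorm_eq_0_iff[OF fin, of f] by (auto simp: eigenvalue_adj_matrix_iff[OF fin])
next
  fix k assume "k \<in> {k. eigenvalue (adj_matrix W E) k}"
  then obtain g where nz: "\<exists>u\<in>W. g u \<noteq> 0"
    and "\<forall>u\<in>W. kernel_apply (adj_kernel E) W g u = k * g u"
    by (auto simp: eigenvalue_adj_matrix_iff[OF fin])
  then have "k * sqnorm W g = quad_form (adj_kernel E) W g"
    by (simp add: quad_form_eq_sum_kernel_apply sqnorm_def sum_distrib_left power2_eq_square
        mult.left_commute)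
  also have "\<dots> \<le> \<mu> * sqnorm W g"
    by (rule max)
  finally show "k \<le> \<mu>"
    using nz sqnorm_nonneg[of W g] sqnorm_eq_0_iff[OF fin, of g] by auto
qed

text \<open>Since the kernel is nonnegative, \<open>|f|\<close> is again a maximiser of the Rayleigh quotient.\<close>
lemma simple_graph_rayleigh:
  assumes sg: "simple_graph V E" and "W \<subseteq> V" and "W \<noteq> {}"
  obtains x where "sqnorm W x = 1" "\<And>v. 0 \<le> x v"
    "\<forall>u\<in>W. kernel_apply (adj_kernel E) W x u = lambda1 W E * x u"
    "\<And>g. \<bar>quad_form (adj_kernel E) W g\<bar> \<le> lambda1 W E * sqnorm W g"
proof -
  let ?K = "adj_kernel E"
  have sym: "\<And>u v. ?K u v = ?K v u"
    using adj_kernel_sym[OF sg] by blast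
  have fin: "finite W"
    using sg \<open>W \<subseteq> V\<close> finite_subset unfolding simple_graph_def by blast
  obtain f where f: "sqnorm W f = 1"
    and max: "\<And>g. quad_form ?K W g \<le> quad_form ?K W f * sqnorm W g"
    using rayleigh_max_exists[OF fin \<open>W \<noteq> {}\<close>] by blast
  define \<mu> where "\<mu> = quad_form ?K W f"
  define x where "x = (\<lambda>v. \<bar>f v\<bar>)"
  have x: "sqnorm W x = 1"
    using f by (simp add: x_def)
  have "quad_form ?K W f \<le> quad_form ?K W x"
    using abs_quad_form_le[of ?K W f] by (simp add: adj_kernel_nonneg x_def)
  then have "quad_form ?K W x = \<mu> * sqnorm W x"
    using max[of x] x unfolding \<mu>_def by simp
  then have eigen: "\<forall>u\<in>W. kernel_apply ?K W x u = \<mu> * x u"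
    using kernel_apply_eq_if_rayleigh_max[where K = ?K, OF fin sym] max unfolding \<mu>_def by blast
  have "lambda1 W E = \<mu>"
    using lambda1_eq_rayleigh_max[OF fin x eigen] max unfolding \<mu>_def by blast
  moreover have "\<bar>quad_form ?K W g\<bar> \<le> \<mu> * sqnorm W g" for g
    using abs_quad_form_le_of_upper_bound[where K = ?K, OF adj_kernel_nonneg] max unfolding \<mu>_def by blast
  moreover have "0 \<le> x v" for v
    by (simp add: x_def)
  ultimately show ?thesis
    using that[of x] x eigen by simp
qed

section \<open>Closed walks around an \<open>r\<close>-net\<close>

lemma kernel_pow_adj_ge_1_if_walk:
  assumes fin: "finite V"
  shows "p \<noteq> [] \<Longrightarrow> set p \<subseteq> V \<Longrightarrow> \<forall>i. Suc i < length p \<longrightarrow> E (p ! i) (p ! Suc i)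
    \<Longrightarrow> 1 \<le> kernel_pow (adj_kernel E) V (length p - 1) (hd p) (last p)"
proof (induction p)
  case (Cons a p)
  show ?case
  proof (cases p)
    case (Cons b p')
    have "\<forall>i. Suc i < length p \<longrightarrow> E (p ! i) (p ! Suc i)"
      using Cons.prems(3) by (metis Suc_less_eq length_Cons nth_Cons_Suc)
    then have "1 \<le> kernel_pow (adj_kernel E) V (length p - 1) b (last p)"
      using Cons.IH Cons.prems Cons by simp
    moreover have "adj_kernel E a b = 1"
      using Cons.prems(3)[rule_format, of 0] Cons by (simp add: adj_kernel_def)
    moreover have "adj_kernel E a b * kernel_pow (adj_kernel E) V (length p - 1) b (last p)
        \<le> (\<Sum>w\<in>V. adj_kernel E a w * kernel_pow (adj_kernel E) V (length p - 1) w (last p))"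
      using Cons.prems(2) Cons fin
      by (intro member_le_sum) (auto intro!: mult_nonneg_nonneg kernel_pow_nonneg adj_kernel_nonneg)
    ultimately show ?thesis
      using Cons by simp
  qed simp
qed simp

lemma dist_le_walk:
  assumes sg: "simple_graph V E" and "dist_le V E u s r" and "u \<noteq> s"
  obtains d w where "1 \<le> d" "d \<le> r" "E u w" "1 \<le> kernel_pow (adj_kernel E) V d u s"
proof -
  obtain p where p: "p \<noteq> []" "hd p = u" "last p = s" "length p \<le> r + 1" "set p \<subseteq> V"
    and walk: "\<forall>i. Suc i < length p \<longrightarrow> E (p ! i) (p ! Suc i)"
    using assms(2) unfolding dist_le_def by blast
  have "length p \<noteq> 1"
    using p \<open>u \<noteq> s\<close> by (auto simp: length_Suc_conv)
  moreover have "length p \<noteq> 0"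
    using p(1) by simp
  ultimately have "2 \<le> length p"
    by presburger
  moreover have "E u (p ! 1)"
    using walk[rule_format, of 0] \<open>2 \<le> length p\<close> p(1,2) by (simp add: hd_conv_nth)
  moreover have "finite V"
    using sg by (simp add: simple_graph_def)
  ultimately show ?thesis
    using that[of "length p - 1"] kernel_pow_adj_ge_1_if_walk[OF _ p(1,5) walk] p by auto
qed

lemma kernel_pow_adj_even_ge_1:
  assumes sg: "simple_graph V E" and "E u w"
  shows "1 \<le> kernel_pow (adj_kernel E) V (2 * j) u u"
proof (induction j)
  case (Suc j)
  have fin: "finite V" and u: "u \<in> V" and w: "w \<in> V" and "E w u"
    using sg \<open>E u w\<close> by (auto simp: simple_graph_def)
  then have "1 \<le> kernel_pow (adj_kernel E) V (length [u, w, u] - 1) (hd [u, w, u]) (last [u, w, u])"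
    using \<open>E u w\<close> by (intro kernel_pow_adj_ge_1_if_walk) (auto simp: less_Suc_eq nth_Cons')
  then have "1 \<le> kernel_pow (adj_kernel E) V 2 u u"
    by (simp add: numeral_2_eq_2)
  then have "1 \<le> kernel_pow (adj_kernel E) V 2 u u * kernel_pow (adj_kernel E) V (2 * j) u u"
    using mult_mono[of 1 _ 1 "kernel_pow (adj_kernel E) V (2 * j) u u"] Suc.IH by simp
  also have "\<dots> \<le> kernel_pow (adj_kernel E) V (2 + 2 * j) u u"
    by (rule kernel_pow_mult_le[OF fin u u adj_kernel_nonneg])
  finally show ?case
    by simp
qed simp

lemma r_net_closed_walk:
  assumes sg: "simple_graph V E" and net: "r_net V E r S" and u: "u \<in> V - S"
  obtains s a b where "s \<in> S" "a + b = 2 * r" "1 \<le> kernel_pow (adj_kernel E) V a u s"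
    "1 \<le> kernel_pow (adj_kernel E) V b s u"
proof -
  let ?P = "kernel_pow (adj_kernel E) V"
  obtain s where s: "s \<in> S" "dist_le V E u s r"
    using net u unfolding r_net_def by blast
  then have "s \<in> V" "u \<noteq> s"
    using net u unfolding r_net_def by auto
  then obtain d w where d: "1 \<le> d" "d \<le> r" "E u w" and us: "1 \<le> ?P d u s"
    using dist_le_walk[OF sg s(2)] by blast
  have fin: "finite V"
    using sg by (simp add: simple_graph_def)
  have sym: "\<And>u v. adj_kernel E u v = adj_kernel E v u"
    by (rule adj_kernel_sym[OF sg])
  have "1 \<le> ?P d s u * ?P (2 * (r - d)) u u"
    using us kernel_pow_sym[where K = "adj_kernel E" and k = d, OF fin sym] \<open>s \<in> V\<close> u
      kernel_pow_adj_even_ge_1[OF sg d(3), of "r - d"] mult_mono[of 1 _ 1 "?P (2 * (r - d)) u u"]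
    by simp
  also have "\<dots> \<le> ?P (d + 2 * (r - d)) s u"
    using \<open>s \<in> V\<close> u by (intro kernel_pow_mult_le[OF fin] adj_kernel_nonneg) auto
  finally show ?thesis
    using that[OF s(1), of d "d + 2 * (r - d)"] us d by simp
qed

lemma kernel_pow_delete_r_net:
  assumes sg: "simple_graph V E" and net: "r_net V E r S" and u: "u \<in> V - S" and v: "v \<in> V - S"
  shows "kernel_pow (adj_kernel E) (V - S) (2 * r) u v + (if u = v then 1 else 0)
    \<le> kernel_pow (adj_kernel E) V (2 * r) u v"
proof (cases "u = v")
  case True
  obtain s a b where s: "s \<in> S" "a + b = 2 * r" and walks: "1 \<le> kernel_pow (adj_kernel E) V a u s"
    "1 \<le> kernel_pow (adj_kernel E) V b s u"
    using r_net_closed_walk[OF sg net u] by blast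
  have "s \<in> V - (V - S)"
    using s net unfolding r_net_def by auto
  with sg u have "kernel_pow (adj_kernel E) (V - S) (a + b) u u
      + kernel_pow (adj_kernel E) V a u s * kernel_pow (adj_kernel E) V b s u
      \<le> kernel_pow (adj_kernel E) V (a + b) u u"
    by (intro kernel_pow_subset_add_le adj_kernel_nonneg) (auto simp: simple_graph_def)
  moreover have "1 \<le> kernel_pow (adj_kernel E) V a u s * kernel_pow (adj_kernel E) V b s u"
    using walks mult_mono[of 1 _ 1 "kernel_pow (adj_kernel E) V b s u"] by simp
  ultimately show ?thesis
    using True s(2) by simp
next
  case False
  then show ?thesis
    using sg by (simp add: kernel_pow_mono_set adj_kernel_nonneg simple_graph_def)
qed

theorem lemma6:
  fixes V :: "'a::linorder set" and E :: "'a \<Rightarrow> 'a \<Rightarrow> bool" and r :: nat and S :: "'a set"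
  assumes "r \<ge> 1"
    and "simple_graph V E"
    and "r_net V E r S"
    and "V - S \<noteq> {}"
  shows "lambda1 (V - S) E ^ (2 * r) \<le> lambda1 V E ^ (2 * r) - 1"
proof -
  let ?K = "adj_kernel E" and ?W = "V - S"
  have fin: "finite V"
    using assms(2) by (simp add: simple_graph_def)
  have sym: "\<And>u v. ?K u v = ?K v u"
    by (rule adj_kernel_sym[OF assms(2)])
  obtain x where x: "sqnorm ?W x = 1" "\<And>v. 0 \<le> x v"
    and eigen: "\<forall>u\<in>?W. kernel_apply ?K ?W x u = lambda1 ?W E * x u"
    using simple_graph_rayleigh[OF assms(2) Diff_subset assms(4)] by metis
  have bound: "\<bar>quad_form ?K V g\<bar> \<le> lambda1 V E * sqnorm V g" for g
    using simple_graph_rayleigh[OF assms(2) subset_refl] assms(4) by blast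
  define z where "z = (\<lambda>v. if v \<in> ?W then x v else 0)"
  have "lambda1 ?W E ^ (2 * r) + 1 = quad_form (kernel_pow ?K ?W (2 * r)) ?W x + sqnorm ?W x"
    using quad_form_kernel_pow_eigen[OF _ eigen] fin x(1) by simp
  also have "\<dots> = quad_form (\<lambda>u v. kernel_pow ?K ?W (2 * r) u v + (if u = v then 1 else 0)) ?W x"
    using fin by (simp add: quad_form_add_identity)
  also have "\<dots> \<le> quad_form (kernel_pow ?K V (2 * r)) ?W x"
    using kernel_pow_delete_r_net[OF assms(2,3)] x(2) by (intro quad_form_mono_kernel)
  also have "\<dots> = quad_form (kernel_pow ?K V (2 * r)) V z"
    unfolding z_def by (rule quad_form_extend_zero[symmetric, OF fin Diff_subset])
  also have "\<dots> = sqnorm V ((kernel_apply ?K V ^^ r) z)"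
    by (rule quad_form_kernel_pow_double[where K = ?K, OF fin sym])
  also have "\<dots> \<le> lambda1 V E ^ (2 * r) * sqnorm V z"
    by (rule sqnorm_funpow_kernel_apply_le[where K = ?K, OF sym bound])
  also have "sqnorm V z = 1"
    unfolding z_def sqnorm_extend_zero[OF fin Diff_subset] by (rule x(1))
  finally show ?thesis
    by simp
qed

end
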